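(* There exist a finite action set $\mathcal{A}$, a deterministic environment, a policy $\pi$ and a nonempty target set $\mathcal{N}^g$ with $\pi(n)>0$ for every $n\in\mathcal{N}^g$, such that the generic tree search which at every iteration $k$ selects $n_k\in\arg\max_{n\in\mathcal{F}_k}\pi(n)$ (ties broken arbitrarily) never selects any node of $\mathcal{N}^g$.
   Context: Setting: a finite action set $\mathcal{A}$, a set of states $\mathcal{S}$ with initial state $s_0$, a deterministic transition function $T:\mathcal{S}\times\mathcal{A}\to\mathcal{S}$, and a set of goal states $\mathcal{G}\subseteq\mathcal{S}$. Nodes are finite sequences of actions; the root $n_0$ is the empty sequence; $T(n)$ denotes the state reached from $s_0$ by applying the actions of $n$ in order; the children of $n$ are the sequences $na$, $a\in\mathcal{A}$. The target set is $\mathcal{N}^g=\{n : T(n)\in\mathcal{G}\}$. A policy is a function $\pi$ from nodes to $[0,1]$ with $\pi(n_0)=1$ and $\pi(n)=\sum_{a\in\mathcal{A}}\pi(na)$ for every node $n$. Generic tree search: $\mathcal{V}_1=\emptyset$, $\mathcal{F}_1=\{n_0\}$; at iteration $k\ge 1$ a node $n_k\in\mathcal{F}_k$ is selected; if $n_k\in\mathcal{N}^g$ the search stops with success; otherwise $\mathcal{V}_{k+1}=\mathcal{V}_k\cup\{n_k\}$ and $\mathcal{F}_{k+1}=\bigl(\bigcup_{n\in\mathcal{V}_{k+1}}\{na:a\in\mathcal{A}\}\bigr)\setminus\mathcal{V}_{k+1}$. *)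

theory Defs
  imports Complex_Main
begin

text \<open>Nodes are finite action sequences (lists); the root is the empty list.\<close>

definition reach :: "('s \<Rightarrow> 'a \<Rightarrow> 's) \<Rightarrow> 's \<Rightarrow> 'a list \<Rightarrow> 's" where
  "reach T s0 n = fold (\<lambda>a s. T s a) n s0"

definition target_set :: "'a set \<Rightarrow> ('s \<Rightarrow> 'a \<Rightarrow> 's) \<Rightarrow> 's \<Rightarrow> 's set \<Rightarrow> 'a list set" where
  "target_set A T s0 G = {n \<in> lists A. reach T s0 n \<in> G}"

definition is_policy :: "'a set \<Rightarrow> ('a list \<Rightarrow> real) \<Rightarrow> bool" where
  "is_policy A \<pi> \<longleftrightarrow> (\<forall>n \<in> lists A. 0 \<le> \<pi> n \<and> \<pi> n \<le> 1)
     \<and> \<pi> [] = 1 \<and> (\<forall>n \<in> lists A. \<pi> n = (\<Sum>a\<in>A. \<pi> (n @ [a])))"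

definition frontier :: "'a set \<Rightarrow> 'a list set \<Rightarrow> 'a list set" where
  "frontier A V = (if V = {} then {[]} else (\<Union>n\<in>V. {n @ [a] | a. a \<in> A}) - V)"

text \<open>Iterations are indexed from 0;
  the visited set before iteration k is {sel 0, ..., sel (k-1)}. The constraint at
  iteration k applies as long as the search has not stopped, i.e. no earlier selected
  node was a target.\<close>
definition greedy_run ::
  "'a set \<Rightarrow> ('a list \<Rightarrow> real) \<Rightarrow> 'a list set \<Rightarrow> (nat \<Rightarrow> 'a list) \<Rightarrow> bool" where
  "greedy_run A \<pi> Ng sel \<longleftrightarrow>
     (\<forall>k. (\<forall>j<k. sel j \<notin> Ng) \<longrightarrow>
        sel k \<in> frontier A (sel ` {..<k}) \<and>
        (\<forall>m \<in> frontier A (sel ` {..<k}). \<pi> m \<le> \<pi> (sel k)))"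

end

theory Submission
  imports Defs
begin

text \<open>Take actions \<open>{0, 1}\<close>, states \<open>nat\<close> with \<open>T = max\<close> and \<open>s\<^sub>0 = 0\<close>, and goal \<open>{1}\<close>: the
  targets are exactly the nodes that use action \<open>1\<close>. The policy gives every node \<open>n\<close> the
  mass \<open>(1/2)^(length n + 1)\<close> and adds \<open>1/2\<close> on the all-zero path; so each node of that
  path has policy value above \<open>1/2\<close>, every other node at most \<open>1/2\<close>. After visiting the first \<open>k\<close>
  nodes of the all-zero path, the frontier consists of the next node of that path and of
  nodes that left it, so the greedy search is forced down the all-zero path forever and
  never reaches a target.\<close>

lemma frontier_replicate_prefixes:
  assumes "a \<in> A"
  shows "frontier A ((\<lambda>j. replicate j a) ` {..<k}) =
    insert (replicate k a) {replicate j a @ [b] | j b. j < k \<and> b \<in> A - {a}}"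
    (is "_ = ?F")
proof (cases k)
  case 0
  then show ?thesis by (simp add: frontier_def)
next
  case (Suc i)
  have snoc_a: "replicate j a @ [a] = replicate (Suc j) a" for j
    by (simp add: replicate_append_same)
  have snoc_b: "replicate j a @ [b] \<noteq> replicate l a" if "b \<noteq> a" for j l b
    using that by (metis in_set_conv_decomp in_set_replicate)
  have "frontier A ((\<lambda>j. replicate j a) ` {..<k}) =
      (\<Union>j<k. {replicate j a @ [b] | b. b \<in> A}) - (\<lambda>j. replicate j a) ` {..<k}"
    using Suc by (auto simp: frontier_def)
  also have "\<dots> = ?F"
  proof (intro set_eqI iffI)
    fix x
    assume "x \<in> (\<Union>j<k. {replicate j a @ [b] | b. b \<in> A}) - (\<lambda>j. replicate j a) ` {..<k}"
    then obtain j b where x: "j < k" "b \<in> A" "x = replicate j a @ [b]"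
      "x \<notin> (\<lambda>j. replicate j a) ` {..<k}"
      by auto
    show "x \<in> ?F"
    proof (cases "b = a")
      case True
      then have "x = replicate (Suc j) a"
        using x by (simp add: snoc_a)
      with x have "Suc j = k"
        by (metis image_eqI lessThan_iff Suc_leI le_neq_implies_less)
      with \<open>x = replicate (Suc j) a\<close> show ?thesis
        by simp
    next
      case False
      with x show ?thesis
        by auto
    qed
  next
    fix x
    assume "x \<in> ?F"
    then show "x \<in> (\<Union>j<k. {replicate j a @ [b] | b. b \<in> A}) - (\<lambda>j. replicate j a) ` {..<k}"
      using Suc assms snoc_a[of i, symmetric] snoc_b by (auto simp del: replicate_Suc)
  qed
  finally show ?thesis .
qed

lemma reach_max_replicate_zero: "reach max 0 (replicate k (0 :: nat)) = 0"
  by (induction k) (simp_all add: reach_def)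

definition zero_path_policy :: "nat list \<Rightarrow> real" where
  "zero_path_policy n = (1/2) ^ (length n + 1) + (if set n \<subseteq> {0} then 1/2 else 0)"

lemma is_policy_zero_path_policy: "is_policy {0, 1} zero_path_policy"
  unfolding is_policy_def
proof (intro conjI ballI)
  fix n :: "nat list"
  have "(1/2 :: real) ^ (length n + 1) \<le> 1/2"
    by (simp add: power_le_one)
  then show "0 \<le> zero_path_policy n" and "zero_path_policy n \<le> 1"
    by (simp_all add: zero_path_policy_def)
  show "zero_path_policy n = (\<Sum>a\<in>{0, 1}. zero_path_policy (n @ [a]))"
    by (simp add: zero_path_policy_def)
qed (simp add: zero_path_policy_def)

lemma zero_path_policy_pos: "0 < zero_path_policy n"
  by (simp add: zero_path_policy_def add_pos_nonneg)

lemma zero_path_policy_replicate: "1/2 < zero_path_policy (replicate k 0)"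
  by (simp add: zero_path_policy_def set_replicate_conv_if)

lemma zero_path_policy_off_path:
  assumes "\<not> set n \<subseteq> {0}"
  shows "zero_path_policy n \<le> 1/2"
proof -
  have "(1/2 :: real) ^ length n \<le> 1"
    by (simp add: power_le_one)
  then show ?thesis
    using assms by (simp add: zero_path_policy_def)
qed

lemma zero_path_policy_frontier_max:
  assumes "m \<in> frontier {0, 1} ((\<lambda>j. replicate j 0) ` {..<k})"
  shows "m = replicate k 0 \<or> zero_path_policy m < zero_path_policy (replicate k 0)"
proof -
  have "m = replicate k 0 \<or> \<not> set m \<subseteq> {0}"
    using assms by (auto simp: frontier_replicate_prefixes)
  then show ?thesis
    using zero_path_policy_off_path zero_path_policy_replicate by (meson le_less_trans)
qed

lemma greedy_run_zero_path:
  "greedy_run {0, 1} zero_path_policy Ng (\<lambda>k. replicate k 0)"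
  unfolding greedy_run_def
  using zero_path_policy_frontier_max
  by (fastforce simp: frontier_replicate_prefixes)

lemma greedy_run_zero_path_unique:
  assumes run: "greedy_run {0, 1} zero_path_policy Ng sel"
    and avoids: "\<And>k. replicate k 0 \<notin> Ng"
  shows "sel k = replicate k 0"
proof (induction k rule: less_induct)
  case (less k)
  then have visited: "sel ` {..<k} = (\<lambda>j. replicate j 0) ` {..<k}"
    by simp
  have "\<forall>j<k. sel j \<notin> Ng"
    using less avoids by simp
  with run have selected: "sel k \<in> frontier {0, 1} (sel ` {..<k})"
    and maximal: "\<forall>m \<in> frontier {0, 1} (sel ` {..<k}).
      zero_path_policy m \<le> zero_path_policy (sel k)"
    unfolding greedy_run_def by blast+
  have "replicate k 0 \<in> frontier {0, 1} (sel ` {..<k})"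
    unfolding visited by (simp add: frontier_replicate_prefixes)
  with maximal have "zero_path_policy (replicate k 0) \<le> zero_path_policy (sel k)"
    by blast
  with zero_path_policy_frontier_max[OF selected[unfolded visited]] show ?case
    by linarith
qed

theorem theorem1:
  shows "\<exists>(A :: nat set) (T :: nat \<Rightarrow> nat \<Rightarrow> nat) (s0 :: nat) (G :: nat set)
            (\<pi> :: nat list \<Rightarrow> real).
     finite A \<and> is_policy A \<pi> \<and>
     target_set A T s0 G \<noteq> {} \<and>
     (\<forall>n \<in> target_set A T s0 G. \<pi> n > 0) \<and>
     (\<exists>sel. greedy_run A \<pi> (target_set A T s0 G) sel) \<and>
     (\<forall>sel. greedy_run A \<pi> (target_set A T s0 G) sel \<longrightarrow>
        (\<forall>k. sel k \<notin> target_set A T s0 G))"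
proof -
  let ?Ng = "target_set {0, 1} max (0 :: nat) {1}"
  have "[1] \<in> ?Ng"
    by (simp add: target_set_def reach_def max_def)
  moreover have zero_path_avoids: "replicate k 0 \<notin> ?Ng" for k
    by (simp add: target_set_def reach_max_replicate_zero)
  ultimately show ?thesis
    using is_policy_zero_path_policy zero_path_policy_pos greedy_run_zero_path
      greedy_run_zero_path_unique[OF _ zero_path_avoids]
    by (intro exI[of _ "{0, 1}"] exI[of _ max] exI[of _ 0] exI[of _ "{1}"]
        exI[of _ zero_path_policy]) auto
qed

end
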